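(* Let $G$ be a locally compact second countable group with two essentially chief series $(A_i)_{i=0}^m$ and $(B_j)_{j=0}^n$. Let $I=\{i\in\{1,\dots,m\}\mid A_i/A_{i-1}$ is a non-negligible chief factor of $G\}$ and $J=\{j\in\{1,\dots,n\}\mid B_j/B_{j-1}$ is a non-negligible chief factor of $G\}$. Then there is a bijection $f:I\to J$, where $f(i)$ is the unique element $j\in J$ such that $A_i/A_{i-1}$ is associated to $B_j/B_{j-1}$.
   Context: A normal factor of $G$ is $K/L$ with $L<K$ closed normal subgroups of $G$; it is a chief factor if no closed normal subgroup of $G$ lies strictly between $L$ and $K$. An essentially chief series for $G$ is a finite series $\{1\}=G_0\le\dots\le G_n=G$ of closed normal subgroups with each $G_{i+1}/G_i$ compact, discrete, or a chief factor of $G$. Normal factors $K_1/L_1$ and $K_2/L_2$ are associated if $\overline{K_1L_2}=\overline{K_2L_1}$ and $K_i\cap\overline{L_1L_2}=L_i$ for $i=1,2$. A chief factor $K/L$ is negligible if it is abelian or associated to a compact or discrete chief factor of $G$. *)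

theory Defs
  imports "HOL-Analysis.Analysis" "HOL-Algebra.Algebra"
begin

definition topological_group :: "('a, 'b) monoid_scheme \<Rightarrow> 'a topology \<Rightarrow> bool" where
  "topological_group G T \<longleftrightarrow>
     group G \<and> topspace T = carrier G \<and>
     continuous_map (prod_topology T T) T (\<lambda>(x, y). x \<otimes>\<^bsub>G\<^esub> y) \<and>
     continuous_map T T (\<lambda>x. inv\<^bsub>G\<^esub> x)"

definition lcsc_group :: "('a, 'b) monoid_scheme \<Rightarrow> 'a topology \<Rightarrow> bool" where
  "lcsc_group G T \<longleftrightarrow>
     topological_group G T \<and> Hausdorff_space T \<and> locally_compact_space T \<and> second_countable T"

definition closed_normal :: "('a, 'b) monoid_scheme \<Rightarrow> 'a topology \<Rightarrow> 'a set \<Rightarrow> bool" where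
  "closed_normal G T N \<longleftrightarrow> N \<lhd> G \<and> closedin T N"

(* quotient topology on the coset space K/L (cosets L k, k \<in> K), K carrying the subspace topology *)
definition quotient_top :: "('a, 'b) monoid_scheme \<Rightarrow> 'a topology \<Rightarrow> 'a set \<Rightarrow> 'a set \<Rightarrow> 'a set topology" where
  "quotient_top G T K L = topology (\<lambda>U. U \<subseteq> (\<lambda>k. L #>\<^bsub>G\<^esub> k) ` K \<and>
       openin (subtopology T K) {k \<in> K. L #>\<^bsub>G\<^esub> k \<in> U})"

definition compact_factor :: "('a, 'b) monoid_scheme \<Rightarrow> 'a topology \<Rightarrow> 'a set \<Rightarrow> 'a set \<Rightarrow> bool" where
  "compact_factor G T K L \<longleftrightarrow> compact_space (quotient_top G T K L)"

definition discrete_factor :: "('a, 'b) monoid_scheme \<Rightarrow> 'a topology \<Rightarrow> 'a set \<Rightarrow> 'a set \<Rightarrow> bool" where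
  "discrete_factor G T K L \<longleftrightarrow>
     (\<forall>x \<in> topspace (quotient_top G T K L). openin (quotient_top G T K L) {x})"

definition abelian_factor :: "('a, 'b) monoid_scheme \<Rightarrow> 'a set \<Rightarrow> 'a set \<Rightarrow> bool" where
  "abelian_factor G K L \<longleftrightarrow>
     (\<forall>a \<in> K. \<forall>b \<in> K. a \<otimes>\<^bsub>G\<^esub> b \<otimes>\<^bsub>G\<^esub> inv\<^bsub>G\<^esub> a \<otimes>\<^bsub>G\<^esub> inv\<^bsub>G\<^esub> b \<in> L)"

definition normal_factor :: "('a, 'b) monoid_scheme \<Rightarrow> 'a topology \<Rightarrow> 'a set \<Rightarrow> 'a set \<Rightarrow> bool" where
  "normal_factor G T K L \<longleftrightarrow> closed_normal G T K \<and> closed_normal G T L \<and> L \<subset> K"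

definition chief_factor :: "('a, 'b) monoid_scheme \<Rightarrow> 'a topology \<Rightarrow> 'a set \<Rightarrow> 'a set \<Rightarrow> bool" where
  "chief_factor G T K L \<longleftrightarrow> normal_factor G T K L \<and>
     \<not> (\<exists>M. closed_normal G T M \<and> L \<subset> M \<and> M \<subset> K)"

definition associated :: "('a, 'b) monoid_scheme \<Rightarrow> 'a topology \<Rightarrow> 'a set \<Rightarrow> 'a set \<Rightarrow> 'a set \<Rightarrow> 'a set \<Rightarrow> bool" where
  "associated G T K1 L1 K2 L2 \<longleftrightarrow>
     T closure_of (K1 <#>\<^bsub>G\<^esub> L2) = T closure_of (K2 <#>\<^bsub>G\<^esub> L1) \<and>
     K1 \<inter> T closure_of (L1 <#>\<^bsub>G\<^esub> L2) = L1 \<and>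
     K2 \<inter> T closure_of (L1 <#>\<^bsub>G\<^esub> L2) = L2"

definition negligible :: "('a, 'b) monoid_scheme \<Rightarrow> 'a topology \<Rightarrow> 'a set \<Rightarrow> 'a set \<Rightarrow> bool" where
  "negligible G T K L \<longleftrightarrow> chief_factor G T K L \<and>
     (abelian_factor G K L \<or>
      (\<exists>K' L'. chief_factor G T K' L' \<and>
               (compact_factor G T K' L' \<or> discrete_factor G T K' L') \<and>
               associated G T K L K' L'))"

definition ess_chief_series :: "('a, 'b) monoid_scheme \<Rightarrow> 'a topology \<Rightarrow> (nat \<Rightarrow> 'a set) \<Rightarrow> nat \<Rightarrow> bool" where
  "ess_chief_series G T A m \<longleftrightarrow>
     A 0 = {\<one>\<^bsub>G\<^esub>} \<and> A m = carrier G \<and>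
     (\<forall>i \<le> m. closed_normal G T (A i)) \<and>
     (\<forall>i < m. A i \<subseteq> A (Suc i) \<and>
        (compact_factor G T (A (Suc i)) (A i) \<or> discrete_factor G T (A (Suc i)) (A i) \<or>
         chief_factor G T (A (Suc i)) (A i)))"

end

theory Submission
  imports Defs
begin

text \<open>
Let K/L be a non-abelian chief factor and C = C_G(K/L) the closed normal subgroup of elements
commuting with K modulo L, so that K \<inter> C = L. A chief factor P/Y is associated to K/L exactly
when Y lies in C but P does not, and associated chief factors have the same centralizer; hence
non-negligibility is invariant under association. In an essentially chief series (B_j) there is
a unique j such that B_{j-1} lies in C but B_j does not. Between B_{j-1} and B_j sits a chief
factor associated to K/L, cut out by the closed normal subgroup generated by [B_j, K] over
B_j \<inter> C, and it inherits compactness or discreteness from B_j/B_{j-1}. So if K/L is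
non-negligible, B_j/B_{j-1} is itself a non-negligible chief factor, and the only factor of the
series associated to K/L. Doing this for both series gives the bijection.
\<close>

section \<open>Closed normal subgroups of topological groups\<close>

lemma image_closure_of_subset:
  assumes "continuous_map U V f" "f ` S \<subseteq> R" "closedin V R"
  shows "f ` (U closure_of S) \<subseteq> R"
  using continuous_map_image_closure_subset[OF assms(1)] closure_of_minimal[OF assms(2,3)]
  by blast

locale top_group = group G for G :: "('a, 'b) monoid_scheme" (structure) +
  fixes T :: "'a topology"
  assumes topspace_eq: "topspace T = carrier G"
    and continuous_map_mult_pair: "continuous_map (prod_topology T T) T (\<lambda>(x, y). x \<otimes> y)"
    and continuous_map_inv_self: "continuous_map T T (\<lambda>x. inv x)"

lemma top_groupI: "topological_group G T \<Longrightarrow> top_group G T"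
  unfolding topological_group_def top_group_def top_group_axioms_def by auto

context top_group
begin

lemma continuous_map_mult:
  assumes "continuous_map Z T f" "continuous_map Z T g"
  shows "continuous_map Z T (\<lambda>z. f z \<otimes> g z)"
  using continuous_map_compose[OF continuous_map_pairedI[OF assms] continuous_map_mult_pair]
  by (simp add: o_def)

lemma continuous_map_inv:
  assumes "continuous_map Z T f"
  shows "continuous_map Z T (\<lambda>z. inv (f z))"
  using continuous_map_compose[OF assms continuous_map_inv_self] by (simp add: o_def)

lemma continuous_map_const_carrier: "c \<in> carrier G \<Longrightarrow> continuous_map Z T (\<lambda>z. c)"
  by (simp add: topspace_eq)

lemma closure_of_subset_carrier: "T closure_of S \<subseteq> carrier G"
  using closure_of_subset_topspace[of T S] topspace_eq by simp

lemma subset_closure_of_carrier: "S \<subseteq> carrier G \<Longrightarrow> S \<subseteq> T closure_of S"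
  by (simp add: closure_of_subset topspace_eq)

lemma subgroup_closure_of:
  assumes "subgroup H G"
  shows "subgroup (T closure_of H) G"
proof (rule subgroupI)
  have H: "H \<subseteq> T closure_of H"
    by (rule subset_closure_of_carrier[OF subgroup.subset[OF assms]])
  show "T closure_of H \<subseteq> carrier G" by (rule closure_of_subset_carrier)
  show "T closure_of H \<noteq> {}" using H subgroup.one_closed[OF assms] by blast
  have "(\<lambda>x. inv x) ` (T closure_of H) \<subseteq> T closure_of H"
    by (rule image_closure_of_subset[OF continuous_map_inv_self])
       (use H subgroup.m_inv_closed[OF assms] in auto)
  then show "inv a \<in> T closure_of H" if "a \<in> T closure_of H" for a
    using that by blast
  have mult: "(\<lambda>(x, y). x \<otimes> y) ` (prod_topology T T closure_of (H \<times> H)) \<subseteq> T closure_of H"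
    by (rule image_closure_of_subset[OF continuous_map_mult_pair])
       (use H subgroup.m_closed[OF assms] in auto)
  show "a \<otimes> b \<in> T closure_of H" if "a \<in> T closure_of H" "b \<in> T closure_of H" for a b
  proof -
    have "(a, b) \<in> prod_topology T T closure_of (H \<times> H)"
      using that by (simp add: closure_of_Times)
    then have "(\<lambda>(x, y). x \<otimes> y) (a, b) \<in> T closure_of H" using mult by blast
    then show ?thesis by simp
  qed
qed

lemma normal_closure_of:
  assumes "N \<lhd> G"
  shows "T closure_of N \<lhd> G"
  unfolding normal_inv_iff
proof (intro conjI ballI)
  have N: "subgroup N G" by (rule normal_imp_subgroup[OF assms])
  show "subgroup (T closure_of N) G" by (rule subgroup_closure_of[OF N])
  fix x h assume x: "x \<in> carrier G" and h: "h \<in> T closure_of N"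
  have "continuous_map T T (\<lambda>z. x \<otimes> z \<otimes> inv x)"
    by (intro continuous_map_mult continuous_map_const_carrier continuous_map_id[unfolded id_def])
       (simp_all add: x)
  then have "(\<lambda>z. x \<otimes> z \<otimes> inv x) ` (T closure_of N) \<subseteq> T closure_of N"
    by (rule image_closure_of_subset)
       (use subset_closure_of_carrier[OF subgroup.subset[OF N]] normal.inv_op_closed2[OF assms x]
         in auto)
  then show "x \<otimes> h \<otimes> inv x \<in> T closure_of N" using h by blast
qed

lemma closed_normalD:
  assumes "closed_normal G T N"
  shows "N \<lhd> G" "subgroup N G" "N \<subseteq> carrier G" "closedin T N"
proof -
  show N: "N \<lhd> G" "closedin T N" using assms unfolding closed_normal_def by simp_all
  show "subgroup N G" by (rule normal_imp_subgroup[OF N(1)])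
  then show "N \<subseteq> carrier G" by (rule subgroup.subset)
qed

lemma closed_normal_Int:
  "closed_normal G T N \<Longrightarrow> closed_normal G T M \<Longrightarrow> closed_normal G T (N \<inter> M)"
  unfolding closed_normal_def using normal_subgroup_intersect closedin_Int by blast

lemma closed_normal_Inter:
  assumes "F \<noteq> {}" "\<And>M. M \<in> F \<Longrightarrow> closed_normal G T M"
  shows "closed_normal G T (\<Inter>F)"
proof -
  have "subgroup (\<Inter>F) G"
    by (rule subgroups_Inter[OF closed_normalD(2)[OF assms(2)] assms(1)])
  moreover have "x \<otimes> h \<otimes> inv x \<in> M" if "x \<in> carrier G" "h \<in> \<Inter>F" "M \<in> F" for x h M
    using that normal.inv_op_closed2[OF closed_normalD(1)[OF assms(2)]] by blast
  moreover have "closedin T (\<Inter>F)"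
    by (rule closedin_Inter[OF assms(1)]) (rule closed_normalD(4)[OF assms(2)])
  ultimately show ?thesis unfolding closed_normal_def normal_inv_iff by blast
qed

definition closed_join :: "'a set \<Rightarrow> 'a set \<Rightarrow> 'a set"
  where "closed_join N M = T closure_of (N <#> M)"

lemma closed_normal_closed_join:
  "N \<lhd> G \<Longrightarrow> M \<lhd> G \<Longrightarrow> closed_normal G T (closed_join N M)"
  unfolding closed_normal_def closed_join_def
  using normal_closure_of[OF normal_subgroup_set_mult_closed] by simp

lemma closed_join_upper1:
  assumes "N \<subseteq> carrier G" "subgroup M G"
  shows "N \<subseteq> closed_join N M"
proof -
  have "N \<subseteq> N <#> M"
    unfolding set_mult_def using assms subgroup.one_closed[OF assms(2)] by force
  also have "\<dots> \<subseteq> closed_join N M"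
    unfolding closed_join_def
    by (rule subset_closure_of_carrier[OF setmult_subset_G]) (use assms subgroup.subset in auto)
  finally show ?thesis .
qed

lemma closed_join_upper2:
  assumes "subgroup N G" "M \<subseteq> carrier G"
  shows "M \<subseteq> closed_join N M"
proof -
  have "M \<subseteq> N <#> M"
    unfolding set_mult_def using assms subgroup.one_closed[OF assms(1)] by force
  also have "\<dots> \<subseteq> closed_join N M"
    unfolding closed_join_def
    by (rule subset_closure_of_carrier[OF setmult_subset_G]) (use assms subgroup.subset in auto)
  finally show ?thesis .
qed

lemma closed_join_least:
  assumes "subgroup H G" "closedin T H" "N \<subseteq> H" "M \<subseteq> H"
  shows "closed_join N M \<subseteq> H"
  unfolding closed_join_def
  by (rule closure_of_minimal[OF _ assms(2)])
     (use assms(3,4) subgroup.m_closed[OF assms(1)] in \<open>auto simp: set_mult_def\<close>)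

lemma associated_iff_closed_join:
  "associated G T K L P Y \<longleftrightarrow>
     closed_join K Y = closed_join P L \<and> K \<inter> closed_join L Y = L \<and> P \<inter> closed_join L Y = Y"
  unfolding associated_def closed_join_def by blast

lemma associated_sym:
  assumes "closed_normal G T L" "closed_normal G T Y" "associated G T K L P Y"
  shows "associated G T P Y K L"
proof -
  have "L <#> Y = Y <#> L"
    by (rule commut_normal[OF closed_normalD(2)[OF assms(1)] closed_normalD(1)[OF assms(2)]])
  then show ?thesis using assms(3) unfolding associated_def by simp
qed

section \<open>Centralizers of normal factors\<close>

lemma mult_inv_cancel_left [simp]:
  "x \<in> carrier G \<Longrightarrow> y \<in> carrier G \<Longrightarrow> x \<otimes> (inv x \<otimes> y) = y"
  by (simp add: m_assoc[symmetric])

lemma inv_mult_cancel_left [simp]: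
  "x \<in> carrier G \<Longrightarrow> y \<in> carrier G \<Longrightarrow> inv x \<otimes> (x \<otimes> y) = y"
  by (simp add: m_assoc[symmetric])

definition commutator :: "'a \<Rightarrow> 'a \<Rightarrow> 'a"
  where "commutator x y = x \<otimes> y \<otimes> inv x \<otimes> inv y"

lemma commutator_swap:
  "x \<in> carrier G \<Longrightarrow> y \<in> carrier G \<Longrightarrow> commutator y x = inv (commutator x y)"
  by (simp add: commutator_def m_assoc inv_mult_group)

lemma commutator_mult_left:
  "g \<in> carrier G \<Longrightarrow> h \<in> carrier G \<Longrightarrow> k \<in> carrier G \<Longrightarrow>
    commutator (g \<otimes> h) k = g \<otimes> commutator h k \<otimes> inv g \<otimes> commutator g k"
  by (simp add: commutator_def m_assoc inv_mult_group)

lemma commutator_inv_left: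
  "g \<in> carrier G \<Longrightarrow> k \<in> carrier G \<Longrightarrow>
    commutator (inv g) k = inv g \<otimes> inv (commutator g k) \<otimes> g"
  by (simp add: commutator_def m_assoc inv_mult_group)

lemma commutator_conj_left:
  "x \<in> carrier G \<Longrightarrow> g \<in> carrier G \<Longrightarrow> k \<in> carrier G \<Longrightarrow>
    commutator (x \<otimes> g \<otimes> inv x) k = x \<otimes> commutator g (inv x \<otimes> k \<otimes> x) \<otimes> inv x"
  by (simp add: commutator_def m_assoc inv_mult_group)

lemma continuous_map_commutator_left:
  "k \<in> carrier G \<Longrightarrow> continuous_map T T (\<lambda>g. commutator g k)"
  unfolding commutator_def
  by (intro continuous_map_mult continuous_map_inv continuous_map_const_carrier
      continuous_map_id[unfolded id_def])

lemma commutator_in_normal_left: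
  assumes "N \<lhd> G" "a \<in> N" "b \<in> carrier G"
  shows "commutator a b \<in> N"
proof -
  have N: "subgroup N G" by (rule normal_imp_subgroup[OF assms(1)])
  have "a \<otimes> (b \<otimes> inv a \<otimes> inv b) \<in> N"
    using assms N normal.inv_op_closed2 subgroup.m_closed subgroup.m_inv_closed by metis
  then show ?thesis
    using subgroup.mem_carrier[OF N assms(2)] assms(3) by (simp add: commutator_def m_assoc)
qed

lemma commutator_in_normal_right:
  assumes "N \<lhd> G" "b \<in> N" "a \<in> carrier G"
  shows "commutator a b \<in> N"
proof -
  have N: "subgroup N G" by (rule normal_imp_subgroup[OF assms(1)])
  have "a \<otimes> b \<otimes> inv a \<otimes> inv b \<in> N"
    using assms N normal.inv_op_closed2 subgroup.m_closed subgroup.m_inv_closed by metis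
  then show ?thesis by (simp add: commutator_def)
qed

definition factor_centralizer :: "'a set \<Rightarrow> 'a set \<Rightarrow> 'a set"
  where "factor_centralizer K L = {g \<in> carrier G. \<forall>x\<in>K. commutator g x \<in> L}"

lemma subgroup_factor_centralizer:
  assumes K: "K \<subseteq> carrier G" and L: "L \<lhd> G"
  shows "subgroup (factor_centralizer K L) G"
proof (rule subgroupI)
  have L': "subgroup L G" by (rule normal_imp_subgroup[OF L])
  show "factor_centralizer K L \<subseteq> carrier G" unfolding factor_centralizer_def by blast
  have "commutator \<one> x = \<one>" if "x \<in> K" for x
    using that K by (auto simp: commutator_def)
  then have "\<one> \<in> factor_centralizer K L"
    unfolding factor_centralizer_def using subgroup.one_closed[OF L'] by simp
  then show "factor_centralizer K L \<noteq> {}" by blast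
next
  fix a assume "a \<in> factor_centralizer K L"
  then have a: "a \<in> carrier G" "\<And>x. x \<in> K \<Longrightarrow> commutator a x \<in> L"
    unfolding factor_centralizer_def by auto
  have "commutator (inv a) x \<in> L" if "x \<in> K" for x
    using commutator_inv_left[OF a(1)] a that K normal.inv_op_closed2[OF L]
      subgroup.m_inv_closed[OF normal_imp_subgroup[OF L]]
    by (metis inv_closed inv_inv subsetD)
  then show "inv a \<in> factor_centralizer K L"
    unfolding factor_centralizer_def using a(1) by simp
next
  fix a b assume "a \<in> factor_centralizer K L" "b \<in> factor_centralizer K L"
  then have a: "a \<in> carrier G" "\<And>x. x \<in> K \<Longrightarrow> commutator a x \<in> L"
    and b: "b \<in> carrier G" "\<And>x. x \<in> K \<Longrightarrow> commutator b x \<in> L"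
    unfolding factor_centralizer_def by auto
  have "commutator (a \<otimes> b) x \<in> L" if "x \<in> K" for x
    using commutator_mult_left[OF a(1) b(1)] a b that K normal.inv_op_closed2[OF L]
      subgroup.m_closed[OF normal_imp_subgroup[OF L]]
    by (metis subsetD)
  then show "a \<otimes> b \<in> factor_centralizer K L"
    unfolding factor_centralizer_def using a(1) b(1) by simp
qed

lemma normal_factor_centralizer:
  assumes K: "K \<lhd> G" and L: "L \<lhd> G"
  shows "factor_centralizer K L \<lhd> G"
  unfolding normal_inv_iff
proof (intro conjI ballI)
  have Kc: "K \<subseteq> carrier G" by (rule subgroup.subset[OF normal_imp_subgroup[OF K]])
  show "subgroup (factor_centralizer K L) G" by (rule subgroup_factor_centralizer[OF Kc L])
  fix y g assume y: "y \<in> carrier G" and "g \<in> factor_centralizer K L"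
  then have g: "g \<in> carrier G" "\<And>x. x \<in> K \<Longrightarrow> commutator g x \<in> L"
    unfolding factor_centralizer_def by auto
  have "commutator (y \<otimes> g \<otimes> inv y) x \<in> L" if "x \<in> K" for x
    using commutator_conj_left[OF y g(1)] g(2)[OF normal.inv_op_closed1[OF K y that]]
      normal.inv_op_closed2[OF L y] that Kc
    by (metis subsetD)
  then show "y \<otimes> g \<otimes> inv y \<in> factor_centralizer K L"
    unfolding factor_centralizer_def using y g(1) by simp
qed

lemma closedin_factor_centralizer:
  assumes K: "K \<subseteq> carrier G" and L: "closedin T L"
  shows "closedin T (factor_centralizer K L)"
proof (cases "K = {}")
  case True
  then show ?thesis unfolding factor_centralizer_def by (simp flip: topspace_eq)
next
  case False
  have "factor_centralizer K L = (\<Inter>x\<in>K. {g \<in> topspace T. commutator g x \<in> L})"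
    unfolding factor_centralizer_def using False topspace_eq by auto
  moreover have "closedin T {g \<in> topspace T. commutator g x \<in> L}" if "x \<in> K" for x
    using closedin_continuous_map_preimage[OF continuous_map_commutator_left L] that K by blast
  ultimately show ?thesis using False by auto
qed

lemma closed_normal_factor_centralizer:
  "K \<lhd> G \<Longrightarrow> closed_normal G T L \<Longrightarrow> closed_normal G T (factor_centralizer K L)"
  unfolding closed_normal_def
  using normal_factor_centralizer closedin_factor_centralizer
    subgroup.subset[OF normal_imp_subgroup]
  by blast

lemma subset_factor_centralizerI:
  assumes "P \<lhd> G" "K \<lhd> G" "P \<inter> K \<subseteq> L"
  shows "P \<subseteq> factor_centralizer K L"
  unfolding factor_centralizer_def
proof (intro subsetI CollectI conjI ballI)
  fix x k assume x: "x \<in> P" and k: "k \<in> K"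
  have "x \<in> carrier G" "k \<in> carrier G"
    using x k assms(1,2) subgroup.mem_carrier normal_imp_subgroup by metis+
  then have "commutator x k \<in> P \<inter> K"
    using commutator_in_normal_left[OF assms(1) x] commutator_in_normal_right[OF assms(2) k] by blast
  then show "commutator x k \<in> L" using assms(3) by blast
next
  show "x \<in> carrier G" if "x \<in> P" for x
    using that assms(1) subgroup.mem_carrier normal_imp_subgroup by metis
qed

lemma lower_subset_factor_centralizer:
  assumes "L \<lhd> G" "K \<subseteq> carrier G"
  shows "L \<subseteq> factor_centralizer K L"
  unfolding factor_centralizer_def
  using assms commutator_in_normal_left subgroup.mem_carrier[OF normal_imp_subgroup[OF assms(1)]]
  by blast

lemma abelian_factor_iff_subset_factor_centralizer:
  "K \<subseteq> carrier G \<Longrightarrow> abelian_factor G K L \<longleftrightarrow> K \<subseteq> factor_centralizer K L"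
  unfolding abelian_factor_def factor_centralizer_def commutator_def by blast

lemma factor_centralizer_Int:
  "factor_centralizer K (M \<inter> N) = factor_centralizer K M \<inter> factor_centralizer K N"
  unfolding factor_centralizer_def by blast

lemma factor_centralizer_mono:
  "M \<subseteq> N \<Longrightarrow> factor_centralizer K M \<subseteq> factor_centralizer K N"
  unfolding factor_centralizer_def by blast

lemma factor_centralizer_self:
  "K \<lhd> G \<Longrightarrow> factor_centralizer K K = carrier G"
  unfolding factor_centralizer_def
  using commutator_in_normal_right by blast

lemma factor_centralizer_swap:
  assumes Y: "Y \<lhd> G" and K: "K \<lhd> G" and L: "subgroup L G" and P: "P \<subseteq> carrier G"
    and KP: "K \<subseteq> factor_centralizer P Y" and YKL: "Y \<inter> K \<subseteq> L"
  shows "P \<subseteq> factor_centralizer K L"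
  unfolding factor_centralizer_def
proof (intro subsetI CollectI conjI ballI)
  fix x k assume x: "x \<in> P" and k: "k \<in> K"
  have kc: "k \<in> carrier G" by (rule subgroup.mem_carrier[OF normal_imp_subgroup[OF K] k])
  have "commutator k x \<in> Y" using KP k x unfolding factor_centralizer_def by blast
  moreover have "commutator k x \<in> K" using commutator_in_normal_left[OF K k] x P by blast
  ultimately have "inv (commutator k x) \<in> L" using YKL subgroup.m_inv_closed[OF L] by blast
  then show "commutator x k \<in> L" using commutator_swap[OF kc] x P by auto
qed (use P in blast)

section \<open>Associated chief factors\<close>

lemma chief_factorD:
  assumes "chief_factor G T K L"
  shows "closed_normal G T K" "closed_normal G T L" "L \<subseteq> K" "L \<noteq> K"
  using assms unfolding chief_factor_def normal_factor_def by auto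

lemma chief_factor_Int_cases:
  assumes "chief_factor G T K L" "closed_normal G T N" "L \<subseteq> N"
  shows "K \<inter> N = L \<or> K \<subseteq> N"
proof -
  have "closed_normal G T (K \<inter> N)"
    by (rule closed_normal_Int[OF chief_factorD(1)[OF assms(1)] assms(2)])
  then show ?thesis
    using assms chief_factorD(3)[OF assms(1)] unfolding chief_factor_def by blast
qed

lemma chief_factor_Int_factor_centralizer:
  assumes "chief_factor G T K L" "\<not> K \<subseteq> factor_centralizer K L"
  shows "K \<inter> factor_centralizer K L = L"
proof -
  note K = chief_factorD(1)[OF assms(1)] and L = chief_factorD(2)[OF assms(1)]
  show ?thesis
    using chief_factor_Int_cases[OF assms(1) closed_normal_factor_centralizer[OF
        closed_normalD(1)[OF K] L] lower_subset_factor_centralizer[OF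
        closed_normalD(1)[OF L] closed_normalD(3)[OF K]]] assms(2)
    by blast
qed

lemma associated_factor_centralizer:
  assumes ch: "chief_factor G T K L" and na: "\<not> K \<subseteq> factor_centralizer K L"
    and P: "closed_normal G T P" and Y: "closed_normal G T Y"
    and as: "associated G T K L P Y"
  shows "Y \<subseteq> factor_centralizer K L" "\<not> P \<subseteq> factor_centralizer K L"
proof -
  note K = chief_factorD(1)[OF ch] and L = chief_factorD(2)[OF ch]
  have j: "closed_join K Y = closed_join P L" "K \<inter> closed_join L Y = L"
    using as unfolding associated_iff_closed_join by auto
  have "Y \<inter> K \<subseteq> L"
    using j(2) closed_join_upper2[OF closed_normalD(2)[OF L] closed_normalD(3)[OF Y]] by blast
  then show "Y \<subseteq> factor_centralizer K L"
    by (rule subset_factor_centralizerI[OF closed_normalD(1)[OF Y] closed_normalD(1)[OF K]])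
  show "\<not> P \<subseteq> factor_centralizer K L"
  proof
    assume "P \<subseteq> factor_centralizer K L"
    have C: "closed_normal G T (factor_centralizer K L)"
      by (rule closed_normal_factor_centralizer[OF closed_normalD(1)[OF K] L])
    have "K \<subseteq> closed_join K Y"
      by (rule closed_join_upper1[OF closed_normalD(3)[OF K] closed_normalD(2)[OF Y]])
    also have "\<dots> = closed_join P L" by (rule j(1))
    also have "\<dots> \<subseteq> factor_centralizer K L"
      by (rule closed_join_least[OF closed_normalD(2,4)[OF C] \<open>P \<subseteq> _\<close>
            lower_subset_factor_centralizer[OF closed_normalD(1)[OF L] closed_normalD(3)[OF K]]])
    finally show False using na by blast
  qed
qed

lemma associated_if_factor_centralizer:
  assumes ch: "chief_factor G T K L" and na: "\<not> K \<subseteq> factor_centralizer K L"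
    and ch': "chief_factor G T P Y"
    and YC: "Y \<subseteq> factor_centralizer K L" and PC: "\<not> P \<subseteq> factor_centralizer K L"
  shows "associated G T K L P Y"
proof -
  note K = closed_normalD[OF chief_factorD(1)[OF ch]]
    and L = closed_normalD[OF chief_factorD(2)[OF ch]]
    and P = closed_normalD[OF chief_factorD(1)[OF ch']]
    and Y = closed_normalD[OF chief_factorD(2)[OF ch']]
  define C where "C = factor_centralizer K L"
  have C: "closed_normal G T C"
    unfolding C_def by (rule closed_normal_factor_centralizer[OF K(1) chief_factorD(2)[OF ch]])
  have LC: "L \<subseteq> C" unfolding C_def by (rule lower_subset_factor_centralizer[OF L(1) K(3)])
  have KC: "K \<inter> C = L" unfolding C_def by (rule chief_factor_Int_factor_centralizer[OF ch na])
  have noncentral: "\<not> P \<inter> K \<subseteq> L"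
    using subset_factor_centralizerI[OF P(1) K(1)] PC unfolding C_def by blast
  have JC: "closed_join L Y \<subseteq> C"
    by (rule closed_join_least[OF closed_normalD(2,4)[OF C] LC YC[folded C_def]])
  note J = closed_normal_closed_join[OF L(1) Y(1)]
  have "K \<inter> closed_join L Y = L"
    using chief_factor_Int_cases[OF ch J closed_join_upper1[OF L(3) Y(2)]] JC na
    unfolding C_def by blast
  moreover have "P \<inter> closed_join L Y = Y"
    using chief_factor_Int_cases[OF ch' J closed_join_upper2[OF L(2) Y(3)]] JC PC
    unfolding C_def by blast
  moreover have "closed_join K Y = closed_join P L"
  proof
    note PL = closed_normal_closed_join[OF P(1) L(1)]
    have "K \<subseteq> closed_join P L"
      using chief_factor_Int_cases[OF ch PL closed_join_upper2[OF P(2) L(3)]]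
        closed_join_upper1[OF P(3) L(2)] noncentral
      by blast
    then show "closed_join K Y \<subseteq> closed_join P L"
      by (rule closed_join_least[OF closed_normalD(2,4)[OF PL]])
         (use closed_join_upper1[OF P(3) L(2)] chief_factorD(3)[OF ch'] in blast)
    note KY = closed_normal_closed_join[OF K(1) Y(1)]
    have "P \<subseteq> closed_join K Y"
      using chief_factor_Int_cases[OF ch' KY closed_join_upper2[OF K(2) Y(3)]]
        closed_join_upper1[OF K(3) Y(2)] noncentral YC KC
      unfolding C_def by blast
    then show "closed_join P L \<subseteq> closed_join K Y"
      by (rule closed_join_least[OF closed_normalD(2,4)[OF KY]])
         (use closed_join_upper1[OF K(3) Y(2)] chief_factorD(3)[OF ch] in blast)
  qed
  ultimately show ?thesis unfolding associated_iff_closed_join by blast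
qed

lemma associated_iff_factor_centralizer:
  assumes ch: "chief_factor G T K L" and na: "\<not> K \<subseteq> factor_centralizer K L"
    and ch': "chief_factor G T P Y"
  shows "associated G T K L P Y \<longleftrightarrow>
           Y \<subseteq> factor_centralizer K L \<and> \<not> P \<subseteq> factor_centralizer K L"
  using associated_factor_centralizer[OF ch na chief_factorD(1,2)[OF ch']]
    associated_if_factor_centralizer[OF ch na ch']
  by blast

lemma factor_centralizer_eq_if_associated:
  assumes ch: "chief_factor G T K L" and na: "\<not> K \<subseteq> factor_centralizer K L"
    and ch': "chief_factor G T P Y" and as: "associated G T K L P Y"
  shows "factor_centralizer P Y = factor_centralizer K L"
proof -
  note K = closed_normalD[OF chief_factorD(1)[OF ch]]
    and L = closed_normalD[OF chief_factorD(2)[OF ch]]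
    and P = closed_normalD[OF chief_factorD(1)[OF ch']]
    and Y = closed_normalD[OF chief_factorD(2)[OF ch']]
  define C where "C = factor_centralizer K L"
  define D where "D = factor_centralizer P Y"
  have C: "closed_normal G T C"
    unfolding C_def by (rule closed_normal_factor_centralizer[OF K(1) chief_factorD(2)[OF ch]])
  have D: "closed_normal G T D"
    unfolding D_def by (rule closed_normal_factor_centralizer[OF P(1) chief_factorD(2)[OF ch']])
  have YC: "Y \<subseteq> C" and PC: "\<not> P \<subseteq> C"
    using associated_factor_centralizer[OF ch na chief_factorD(1,2)[OF ch'] as]
    unfolding C_def by auto
  have KC: "K \<inter> C = L" unfolding C_def by (rule chief_factor_Int_factor_centralizer[OF ch na])
  have "P \<inter> C = Y" using chief_factor_Int_cases[OF ch' C YC] PC by blast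
  then have CD: "C \<subseteq> D"
    unfolding D_def by (intro subset_factor_centralizerI[OF closed_normalD(1)[OF C] P(1)]) blast
  have "L \<subseteq> C" unfolding C_def by (rule lower_subset_factor_centralizer[OF L(1) K(3)])
  moreover have "\<not> K \<subseteq> D"
  proof
    assume "K \<subseteq> D"
    then have "P \<subseteq> C"
      unfolding C_def D_def
      by (rule factor_centralizer_swap[OF Y(1) K(1) L(2) P(3)]) (use YC KC in blast)
    then show False using PC by blast
  qed
  ultimately have "K \<inter> D = L" using chief_factor_Int_cases[OF ch D] CD by blast
  then have "D \<subseteq> C"
    unfolding C_def by (intro subset_factor_centralizerI[OF closed_normalD(1)[OF D] K(1)]) blast
  then show ?thesis using CD unfolding C_def D_def by blast
qed

lemma associated_trans:
  assumes ch: "chief_factor G T K L" and na: "\<not> K \<subseteq> factor_centralizer K L"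
    and ch': "chief_factor G T P Y" and ch'': "chief_factor G T K' L'"
    and as: "associated G T K L P Y" and as': "associated G T P Y K' L'"
  shows "associated G T K L K' L'"
proof -
  have eq: "factor_centralizer P Y = factor_centralizer K L"
    by (rule factor_centralizer_eq_if_associated[OF ch na ch' as])
  have "\<not> P \<subseteq> factor_centralizer P Y"
    using as eq associated_iff_factor_centralizer[OF ch na ch'] by simp
  then show ?thesis
    using as' eq associated_iff_factor_centralizer[OF ch' _ ch'']
      associated_iff_factor_centralizer[OF ch na ch'']
    by simp
qed

lemma subset_factor_centralizer_if_noncentral:
  assumes ch: "chief_factor G T K L" and P: "P \<lhd> G" and M: "closed_normal G T M"
    and PLM: "P \<inter> L \<subseteq> M" and MC: "\<not> M \<subseteq> factor_centralizer K L"
  shows "P \<subseteq> factor_centralizer K M"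
proof -
  note K = closed_normalD[OF chief_factorD(1)[OF ch]]
    and L = closed_normalD[OF chief_factorD(2)[OF ch]]
    and M' = closed_normalD[OF M]
  have "L \<subseteq> factor_centralizer P M"
    by (rule subset_factor_centralizerI[OF L(1) P]) (use PLM in blast)
  from chief_factor_Int_cases[OF ch closed_normal_factor_centralizer[OF P M] this]
  show ?thesis
  proof
    assume KD: "K \<inter> factor_centralizer P M = L"
    have "M \<subseteq> factor_centralizer P M"
      by (rule subset_factor_centralizerI[OF M'(1) P]) blast
    then have "M \<subseteq> factor_centralizer K L"
      by (intro subset_factor_centralizerI[OF M'(1) K(1)]) (use KD in blast)
    then show ?thesis using MC by blast
  next
    assume "K \<subseteq> factor_centralizer P M"
    then show ?thesis
      by (rule factor_centralizer_swap[OF M'(1) K(1) M'(2)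
            subgroup.subset[OF normal_imp_subgroup[OF P]]]) blast
  qed
qed

lemma noncentral_if_subset_factor_centralizer:
  assumes ch: "chief_factor G T K L" and na: "\<not> K \<subseteq> factor_centralizer K L"
    and P: "P \<lhd> G" and M: "closed_normal G T M"
    and PM: "P \<subseteq> factor_centralizer K M" and PC: "\<not> P \<subseteq> factor_centralizer K L"
  shows "\<not> M \<subseteq> factor_centralizer K L"
proof
  assume MC: "M \<subseteq> factor_centralizer K L"
  note K = closed_normalD[OF chief_factorD(1)[OF ch]]
    and L = closed_normalD[OF chief_factorD(2)[OF ch]]
    and M' = closed_normalD[OF M]
  have C: "closed_normal G T (factor_centralizer K L)"
    by (rule closed_normal_factor_centralizer[OF K(1) chief_factorD(2)[OF ch]])
  have J: "closed_join L M \<subseteq> factor_centralizer K L"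
    by (rule closed_join_least[OF closed_normalD(2,4)[OF C]
          lower_subset_factor_centralizer[OF L(1) K(3)] MC])
  from chief_factor_Int_cases[OF ch closed_normal_closed_join[OF L(1) M'(1)]
      closed_join_upper1[OF L(3) M'(2)]]
  show False
  proof
    assume "K \<inter> closed_join L M = L"
    then have "M \<inter> K \<subseteq> L" using closed_join_upper2[OF L(2) M'(3)] by blast
    then have "factor_centralizer K (M \<inter> K) \<subseteq> factor_centralizer K L"
      by (rule factor_centralizer_mono)
    moreover have "P \<subseteq> factor_centralizer K (M \<inter> K)"
      using PM P factor_centralizer_self[OF K(1)] subgroup.subset[OF normal_imp_subgroup]
      unfolding factor_centralizer_Int by blast
    ultimately show False using PC by blast
  next
    assume "K \<subseteq> closed_join L M"
    then show False using J na by blast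
  qed
qed

lemma exists_associated_chief_factor_within:
  assumes ch: "chief_factor G T K L" and na: "\<not> K \<subseteq> factor_centralizer K L"
    and P: "closed_normal G T P" and YP: "Y \<subseteq> P"
    and YC: "Y \<subseteq> factor_centralizer K L" and PC: "\<not> P \<subseteq> factor_centralizer K L"
  obtains K' L' where "chief_factor G T K' L'" "Y \<subseteq> L'" "K' \<subseteq> P"
    "associated G T K L K' L'"
proof -
  note K = closed_normalD[OF chief_factorD(1)[OF ch]]
    and L = closed_normalD[OF chief_factorD(2)[OF ch]]
    and P' = closed_normalD[OF P]
  define C where "C = factor_centralizer K L"
  define L' where "L' = P \<inter> C"
  \<comment> \<open>K' is the closed normal subgroup generated by L' and the commutators [P, K]\<close>
  define F where "F = {M. closed_normal G T M \<and> L' \<subseteq> M \<and> P \<subseteq> factor_centralizer K M}"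
  define K' where "K' = \<Inter>F"
  have C: "closed_normal G T C"
    unfolding C_def by (rule closed_normal_factor_centralizer[OF K(1) chief_factorD(2)[OF ch]])
  have "P \<subseteq> factor_centralizer K P" by (rule subset_factor_centralizerI[OF P'(1) K(1)]) blast
  then have PF: "P \<in> F" unfolding F_def L'_def using P by blast
  have K': "closed_normal G T K'"
    unfolding K'_def by (rule closed_normal_Inter) (use PF F_def in auto)
  have K'P: "K' \<subseteq> P" unfolding K'_def using PF by blast
  have L'K': "L' \<subseteq> K'" unfolding K'_def F_def by blast
  have "P \<subseteq> factor_centralizer K K'"
    using PF unfolding K'_def F_def factor_centralizer_def by auto
  then have K'C: "\<not> K' \<subseteq> C"
    unfolding C_def by (rule noncentral_if_subset_factor_centralizer[OF ch na P'(1) K' _ PC])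
  have "chief_factor G T K' L'"
    unfolding chief_factor_def normal_factor_def
  proof (intro conjI notI)
    show "closed_normal G T K'" by (rule K')
    show "closed_normal G T L'" unfolding L'_def by (rule closed_normal_Int[OF P C])
    show "L' \<subset> K'" using L'K' K'C unfolding L'_def by blast
    assume "\<exists>M. closed_normal G T M \<and> L' \<subset> M \<and> M \<subset> K'"
    then obtain M where M: "closed_normal G T M" "L' \<subset> M" "M \<subset> K'" by blast
    have "\<not> M \<subseteq> C" using M K'P unfolding L'_def by blast
    moreover have "P \<inter> L \<subseteq> M"
      using M(2) lower_subset_factor_centralizer[OF L(1) K(3)] unfolding L'_def C_def by blast
    ultimately have "P \<subseteq> factor_centralizer K M"
      unfolding C_def by (intro subset_factor_centralizer_if_noncentral[OF ch P'(1) M(1)])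
    then have "K' \<subseteq> M" unfolding K'_def F_def using M(1,2) by blast
    then show False using M(3) by blast
  qed
  moreover have "Y \<subseteq> L'" unfolding L'_def C_def using YP YC by blast
  moreover have "associated G T K L K' L'"
    by (rule associated_if_factor_centralizer[OF ch na \<open>chief_factor G T K' L'\<close>])
       (use K'C[unfolded C_def] in \<open>auto simp: L'_def C_def\<close>)
  ultimately show ?thesis using K'P that by blast
qed

end

section \<open>Quotient topology of normal factors\<close>

lemma openin_subtopology_subset:
  "openin (subtopology Z U) S \<Longrightarrow> S \<subseteq> V \<Longrightarrow> V \<subseteq> U \<Longrightarrow> openin (subtopology Z V) S"
  unfolding openin_subtopology by blast

lemma istopology_quotient:
  "istopology (\<lambda>U. U \<subseteq> q ` P \<and> openin (subtopology Z P) {k \<in> P. q k \<in> U})"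
proof -
  have "{k \<in> P. q k \<in> S \<inter> S'} = {k \<in> P. q k \<in> S} \<inter> {k \<in> P. q k \<in> S'}" for S S'
    by blast
  moreover have "{k \<in> P. q k \<in> \<Union>KK} = (\<Union>U\<in>KK. {k \<in> P. q k \<in> U})" for KK
    by blast
  ultimately show ?thesis
    unfolding istopology_def by (auto intro!: openin_Int openin_Union)
qed

lemma openin_quotient_top:
  "openin (quotient_top G T P Y) U \<longleftrightarrow>
     U \<subseteq> (\<lambda>k. Y #>\<^bsub>G\<^esub> k) ` P \<and> openin (subtopology T P) {k \<in> P. Y #>\<^bsub>G\<^esub> k \<in> U}"
  unfolding quotient_top_def by (simp add: topology_inverse'[OF istopology_quotient])

lemma topspace_quotient_top:
  assumes "P \<subseteq> topspace T"
  shows "topspace (quotient_top G T P Y) = (\<lambda>k. Y #>\<^bsub>G\<^esub> k) ` P"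
proof
  show "topspace (quotient_top G T P Y) \<subseteq> (\<lambda>k. Y #>\<^bsub>G\<^esub> k) ` P"
    unfolding topspace_def openin_quotient_top by blast
  have "{k \<in> P. Y #>\<^bsub>G\<^esub> k \<in> (\<lambda>k. Y #>\<^bsub>G\<^esub> k) ` P} = topspace (subtopology T P)"
    using assms by auto
  then have "openin (quotient_top G T P Y) ((\<lambda>k. Y #>\<^bsub>G\<^esub> k) ` P)"
    unfolding openin_quotient_top using openin_topspace[of "subtopology T P"] by simp
  then show "(\<lambda>k. Y #>\<^bsub>G\<^esub> k) ` P \<subseteq> topspace (quotient_top G T P Y)"
    by (rule openin_subset)
qed

lemma closedin_quotient_topI:
  assumes "P \<subseteq> topspace T" "S \<subseteq> (\<lambda>k. Y #>\<^bsub>G\<^esub> k) ` P"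
    and "closedin (subtopology T P) {k \<in> P. Y #>\<^bsub>G\<^esub> k \<in> S}"
  shows "closedin (quotient_top G T P Y) S"
proof -
  have "{k \<in> P. Y #>\<^bsub>G\<^esub> k \<in> (\<lambda>k. Y #>\<^bsub>G\<^esub> k) ` P - S} =
      topspace (subtopology T P) - {k \<in> P. Y #>\<^bsub>G\<^esub> k \<in> S}"
    using assms(1) by auto
  moreover have "openin (subtopology T P) (topspace (subtopology T P) - {k \<in> P. Y #>\<^bsub>G\<^esub> k \<in> S})"
    using assms(3) unfolding closedin_def by blast
  ultimately have "openin (quotient_top G T P Y) ((\<lambda>k. Y #>\<^bsub>G\<^esub> k) ` P - S)"
    unfolding openin_quotient_top by simp
  then show ?thesis
    unfolding closedin_def topspace_quotient_top[OF assms(1)] using assms(2) by blast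
qed

context top_group
begin

lemma rcos_eq_rcos_iff:
  assumes "subgroup H G" "a \<in> carrier G" "b \<in> carrier G"
  shows "H #> a = H #> b \<longleftrightarrow> a \<otimes> inv b \<in> H"
  using subgroup.rcos_module[OF assms(1) is_group assms(3,2)] rcos_self[OF assms(2,1)]
    repr_independence[OF _ assms(3,1)]
  by blast

lemma set_mult_subgroup_absorb:
  assumes "subgroup H G" "subgroup Y G" "Y \<subseteq> H"
  shows "H <#> Y = H"
proof
  show "H <#> Y \<subseteq> H"
    unfolding set_mult_def using assms(3) subgroup.m_closed[OF assms(1)] by blast
  show "H \<subseteq> H <#> Y"
    unfolding set_mult_def
    using subgroup.one_closed[OF assms(2)] subgroup.mem_carrier[OF assms(1)] r_one by force
qed

lemma set_mult_rcos_absorb: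
  assumes "subgroup H G" "subgroup Y G" "Y \<subseteq> H" "k \<in> carrier G"
  shows "H <#> (Y #> k) = H #> k"
  using setmult_rcos_assoc[OF subgroup.subset[OF assms(1)] subgroup.subset[OF assms(2)] assms(4)]
    set_mult_subgroup_absorb[OF assms(1-3)]
  by simp

lemma rcos_subset_subgroup:
  "subgroup H G \<Longrightarrow> Y \<subseteq> H \<Longrightarrow> a \<in> H \<Longrightarrow> Y #> a \<subseteq> H"
  unfolding r_coset_def by (auto intro: subgroup.m_closed)

lemma rcos_vimage_singleton:
  assumes P: "subgroup P G" and Y: "subgroup Y G" "Y \<subseteq> P" and a: "a \<in> P"
  shows "{k \<in> P. Y #> k \<in> {Y #> a}} = Y #> a"
proof -
  have ac: "a \<in> carrier G" by (rule subgroup.mem_carrier[OF P a])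
  have iff: "Y #> k = Y #> a \<longleftrightarrow> k \<in> Y #> a" if "k \<in> carrier G" for k
    using rcos_eq_rcos_iff[OF Y(1) that ac] subgroup.rcos_module[OF Y(1) is_group ac that] by simp
  show ?thesis
  proof (intro equalityI subsetI)
    fix k assume "k \<in> {k \<in> P. Y #> k \<in> {Y #> a}}"
    then show "k \<in> Y #> a" using iff subgroup.mem_carrier[OF P] by auto
  next
    fix k assume k: "k \<in> Y #> a"
    then have "k \<in> P" using rcos_subset_subgroup[OF P Y(2) a] by blast
    then show "k \<in> {k \<in> P. Y #> k \<in> {Y #> a}}" using iff k subgroup.mem_carrier[OF P] by auto
  qed
qed

lemma rcos_eq_UN_rcos:
  assumes L: "subgroup L G" and Y: "subgroup Y G" "Y \<subseteq> L" and k: "k \<in> carrier G"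
  shows "L #> k = (\<Union>l\<in>L. Y #> (l \<otimes> k))"
proof (intro equalityI subsetI)
  fix x assume "x \<in> L #> k"
  then obtain l where "l \<in> L" "x = l \<otimes> k" unfolding r_coset_def by blast
  moreover have "l \<otimes> k \<in> Y #> (l \<otimes> k)"
    using \<open>l \<in> L\<close> k subgroup.mem_carrier[OF L] by (intro rcos_self[OF _ Y(1)]) auto
  ultimately show "x \<in> (\<Union>l\<in>L. Y #> (l \<otimes> k))" by blast
next
  fix x assume "x \<in> (\<Union>l\<in>L. Y #> (l \<otimes> k))"
  then obtain l y where ly: "l \<in> L" "y \<in> Y" "x = y \<otimes> (l \<otimes> k)" unfolding r_coset_def by blast
  moreover have "y \<in> carrier G" "l \<in> carrier G"
    using ly Y(2) subgroup.mem_carrier[OF L] by auto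
  ultimately have "x = (y \<otimes> l) \<otimes> k" using k by (simp add: m_assoc)
  moreover have "y \<otimes> l \<in> L" using ly Y(2) subgroup.m_closed[OF L] by blast
  ultimately show "x \<in> L #> k" unfolding r_coset_def by blast
qed

lemma mem_of_rcos_mem_image:
  assumes K: "subgroup K G" and Y: "subgroup Y G" "Y \<subseteq> K"
    and k: "k \<in> carrier G" "Y #> k \<in> (\<lambda>x. Y #> x) ` K"
  shows "k \<in> K"
proof -
  obtain x where x: "x \<in> K" "Y #> k = Y #> x" using k(2) by blast
  have xc: "x \<in> carrier G" by (rule subgroup.mem_carrier[OF K x(1)])
  have "k \<otimes> inv x \<in> Y" using x(2) rcos_eq_rcos_iff[OF Y(1) k(1) xc] by simp
  then have "k \<otimes> inv x \<otimes> x \<in> K" using Y(2) subgroup.m_closed[OF K _ x(1)] by blast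
  then show ?thesis using k(1) xc by (simp add: m_assoc)
qed

lemma openin_quotient_top_image:
  assumes P: "subgroup P G" and Y: "subgroup Y G" "Y \<subseteq> P"
    and U: "openin (subtopology T P) U"
  shows "openin (quotient_top G T P Y) ((\<lambda>k. Y #> k) ` U)"
proof -
  obtain Ob where Ob: "openin T Ob" "U = Ob \<inter> P" using U unfolding openin_subtopology by blast
  \<comment> \<open>the saturation Y Ob, a union of translates of the open set Ob\<close>
  define W where "W = (\<Union>y\<in>Y. {z \<in> topspace T. inv y \<otimes> z \<in> Ob})"
  have "{k \<in> P. Y #> k \<in> (\<lambda>k. Y #> k) ` U} = P \<inter> W"
  proof (intro equalityI subsetI)
    fix k assume "k \<in> {k \<in> P. Y #> k \<in> (\<lambda>k. Y #> k) ` U}"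
    then obtain u where k: "k \<in> P" and u: "u \<in> U" "Y #> k = Y #> u" by blast
    have kc: "k \<in> carrier G" and uc: "u \<in> carrier G"
      using k u Ob(2) subgroup.subset[OF P] by auto
    have "k \<otimes> inv u \<in> Y" using u(2) rcos_eq_rcos_iff[OF Y(1) kc uc] by simp
    moreover have "inv (k \<otimes> inv u) \<otimes> k = u" using kc uc by (simp add: inv_mult_group m_assoc)
    ultimately show "k \<in> P \<inter> W" unfolding W_def using k u Ob(2) kc topspace_eq by force
  next
    fix k assume "k \<in> P \<inter> W"
    then obtain y where k: "k \<in> P" and y: "y \<in> Y" "inv y \<otimes> k \<in> Ob" unfolding W_def by blast
    have kc: "k \<in> carrier G" and yc: "y \<in> carrier G"
      using k y Y subgroup.subset[OF P] by auto
    have "inv y \<otimes> k \<in> P" using k y Y subgroup.m_closed[OF P] subgroup.m_inv_closed[OF P] by blast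
    moreover have "k \<otimes> inv (inv y \<otimes> k) = y" using kc yc by (simp add: inv_mult_group m_assoc)
    ultimately have "Y #> k = Y #> (inv y \<otimes> k)"
      using rcos_eq_rcos_iff[OF Y(1) kc] y(1) kc yc by simp
    then show "k \<in> {k \<in> P. Y #> k \<in> (\<lambda>k. Y #> k) ` U}"
      using k y(2) \<open>inv y \<otimes> k \<in> P\<close> Ob(2) by blast
  qed
  moreover have "openin T W"
    unfolding W_def
  proof (intro openin_Union ballI, clarify)
    fix y assume "y \<in> Y"
    then have "continuous_map T T (\<lambda>z. inv y \<otimes> z)"
      using Y subgroup.subset[OF P]
      by (intro continuous_map_mult continuous_map_const_carrier continuous_map_id[unfolded id_def]) auto
    then show "openin T {z \<in> topspace T. inv y \<otimes> z \<in> Ob}"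
      by (rule openin_continuous_map_preimage[OF _ Ob(1)])
  qed
  ultimately show ?thesis
    unfolding openin_quotient_top using Ob(2) openin_subtopology_Int2 by auto
qed

text \<open>As L <#> (Y #> k) = L #> k, this is the map Y k \<mapsto> L k from the image of K in P/Y onto K/L.\<close>

lemma continuous_map_quotient_top_coarsen:
  assumes P: "subgroup P G" and K: "subgroup K G" "K \<subseteq> P"
    and L: "subgroup L G" and Y: "subgroup Y G" "Y \<subseteq> L" "L \<subseteq> K"
  shows "continuous_map (subtopology (quotient_top G T P Y) ((\<lambda>k. Y #> k) ` K))
           (quotient_top G T K L) (\<lambda>c. L <#> c)"
proof -
  have Kc: "K \<subseteq> carrier G" by (rule subgroup.subset[OF K(1)])
  have coarsen: "L <#> (Y #> k) = L #> k" if "k \<in> carrier G" for k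
    by (rule set_mult_rcos_absorb[OF L Y(1,2) that])
  have S: "(\<lambda>k. Y #> k) ` K \<subseteq> topspace (quotient_top G T P Y)"
    using K subgroup.subset[OF P] topspace_quotient_top[of P T G Y] topspace_eq by auto
  have vimage: "{c \<in> (\<lambda>k. Y #> k) ` K. L <#> c \<in> V} =
      (\<lambda>k. Y #> k) ` K \<inter> (\<lambda>k. Y #> k) ` (Ob \<inter> P)"
    if Ob: "{k \<in> K. L #> k \<in> V} = Ob \<inter> K" for V Ob
  proof (intro equalityI subsetI)
    fix c assume "c \<in> {c \<in> (\<lambda>k. Y #> k) ` K. L <#> c \<in> V}"
    then obtain k where "k \<in> K" "c = Y #> k" "L #> k \<in> V" using coarsen Kc by auto
    then show "c \<in> (\<lambda>k. Y #> k) ` K \<inter> (\<lambda>k. Y #> k) ` (Ob \<inter> P)" using Ob K(2) by blast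
  next
    fix c assume "c \<in> (\<lambda>k. Y #> k) ` K \<inter> (\<lambda>k. Y #> k) ` (Ob \<inter> P)"
    then obtain k x where k: "k \<in> K" "c = Y #> k" and x: "x \<in> Ob" "x \<in> P" "c = Y #> x" by blast
    have kc: "k \<in> carrier G" and xc: "x \<in> carrier G"
      using k x Kc subgroup.subset[OF P] by auto
    have "x \<in> K"
      by (rule mem_of_rcos_mem_image[OF K(1) Y(1)]) (use k x xc Y(2,3) in auto)
    then have "L #> x \<in> V" using Ob x by blast
    moreover have "x \<otimes> inv k \<in> L"
      using k(2) x(3) rcos_eq_rcos_iff[OF Y(1) xc kc] Y(2) by auto
    ultimately have "L #> k \<in> V" using rcos_eq_rcos_iff[OF L xc kc] by simp
    then show "c \<in> {c \<in> (\<lambda>k. Y #> k) ` K. L <#> c \<in> V}" using k coarsen kc by auto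
  qed
  have open_image: "openin (quotient_top G T P Y) ((\<lambda>k. Y #> k) ` (Ob \<inter> P))"
    if "openin T Ob" for Ob
    using openin_quotient_top_image[OF P Y(1)] Y(2,3) K(2) openin_subtopology_Int[OF that]
    by blast
  show ?thesis
    unfolding continuous_map_def topspace_subtopology_subset[OF S]
  proof (intro conjI allI impI)
    show "(\<lambda>c. L <#> c) \<in> (\<lambda>k. Y #> k) ` K \<rightarrow> topspace (quotient_top G T K L)"
      using coarsen Kc topspace_quotient_top[of K T G L] topspace_eq by auto
    fix V assume "openin (quotient_top G T K L) V"
    then obtain Ob where Ob: "openin T Ob" "{k \<in> K. L #> k \<in> V} = Ob \<inter> K"
      unfolding openin_quotient_top openin_subtopology by blast
    show "openin (subtopology (quotient_top G T P Y) ((\<lambda>k. Y #> k) ` K))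
        {c \<in> (\<lambda>k. Y #> k) ` K. L <#> c \<in> V}"
      unfolding vimage[OF Ob(2)] by (rule openin_subtopology_Int2[OF open_image[OF Ob(1)]])
  qed
qed

lemma compact_factor_mono:
  assumes P: "subgroup P G" and K: "subgroup K G" "K \<subseteq> P" "closedin T K"
    and L: "subgroup L G" and Y: "subgroup Y G" "Y \<subseteq> L" "L \<subseteq> K"
    and compact: "compact_factor G T P Y"
  shows "compact_factor G T K L"
proof -
  define S where "S = (\<lambda>k. Y #> k) ` K"
  have Pt: "P \<subseteq> topspace T" using subgroup.subset[OF P] topspace_eq by simp
  have "{k \<in> P. Y #> k \<in> S} = K"
    unfolding S_def using mem_of_rcos_mem_image[OF K(1) Y(1)] Y(2,3) K(2) subgroup.subset[OF P]
    by blast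
  moreover have "closedin (subtopology T P) K"
    using closedin_subtopology_Int_closed[OF K(3), of P] K(2) by (simp add: Int_absorb1)
  ultimately have "closedin (quotient_top G T P Y) S"
    by (intro closedin_quotient_topI[OF Pt]) (use K(2) S_def in auto)
  then have "compactin (quotient_top G T P Y) S"
    using compact closedin_compact_space unfolding compact_factor_def by blast
  then have "compactin (subtopology (quotient_top G T P Y) S) S"
    by (simp add: compactin_subtopology)
  from image_compactin[OF this continuous_map_quotient_top_coarsen[OF P K(1,2) L Y, folded S_def]]
  have "compactin (quotient_top G T K L) ((\<lambda>c. L <#> c) ` S)" .
  moreover have "(\<lambda>c. L <#> c) ` S = topspace (quotient_top G T K L)"
    unfolding S_def image_image topspace_quotient_top[OF subset_trans[OF K(2) Pt]]
    using set_mult_rcos_absorb[OF L Y(1,2)] subgroup.subset[OF K(1)] by (auto intro!: image_cong)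
  ultimately show ?thesis unfolding compact_factor_def compact_space_def by simp
qed

lemma discrete_factor_mono:
  assumes P: "subgroup P G" and K: "subgroup K G" "K \<subseteq> P"
    and L: "subgroup L G" and Y: "subgroup Y G" "Y \<subseteq> L" "L \<subseteq> K"
    and discrete: "discrete_factor G T P Y"
  shows "discrete_factor G T K L"
  unfolding discrete_factor_def
proof
  have Pt: "P \<subseteq> topspace T" using subgroup.subset[OF P] topspace_eq by simp
  have Kt: "K \<subseteq> topspace T" using subgroup.subset[OF K(1)] topspace_eq by simp
  fix c assume "c \<in> topspace (quotient_top G T K L)"
  then obtain k where k: "k \<in> K" "c = L #> k" using topspace_quotient_top[of K T G L] Kt by auto
  have YP: "Y \<subseteq> P" using Y(2,3) K(2) by blast
  have open_rcos: "openin (subtopology T P) (Y #> a)" if "a \<in> P" for a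
  proof -
    have "Y #> a \<in> topspace (quotient_top G T P Y)"
      using that topspace_quotient_top[of P T G Y] Pt by auto
    then have "openin (quotient_top G T P Y) {Y #> a}"
      using discrete unfolding discrete_factor_def by blast
    then show ?thesis
      unfolding openin_quotient_top rcos_vimage_singleton[OF P Y(1) YP that] by blast
  qed
  have "openin (subtopology T K) (Y #> (l \<otimes> k))" if "l \<in> L" for l
  proof -
    have lk: "l \<otimes> k \<in> K" using that k(1) Y(3) subgroup.m_closed[OF K(1)] by blast
    show ?thesis
      by (rule openin_subtopology_subset[OF open_rcos rcos_subset_subgroup[OF K(1) _ lk] K(2)])
         (use lk K(2) Y(2,3) in blast)+
  qed
  then have "openin (subtopology T K) (L #> k)"
    unfolding rcos_eq_UN_rcos[OF L Y(1,2) subgroup.mem_carrier[OF K(1) k(1)]]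
    by (intro openin_Union) blast
  then show "openin (quotient_top G T K L) {c}"
    unfolding openin_quotient_top using rcos_vimage_singleton[OF K(1) L Y(3) k(1)] k by auto
qed

section \<open>Essentially chief series\<close>

lemma not_central_if_not_negligible:
  assumes "chief_factor G T K L" "\<not> negligible G T K L"
  shows "\<not> K \<subseteq> factor_centralizer K L"
  using assms abelian_factor_iff_subset_factor_centralizer[OF closed_normalD(3)[OF
      chief_factorD(1)[OF assms(1)]]]
  unfolding negligible_def by blast

lemma not_negligible_if_associated:
  assumes ch: "chief_factor G T K L" and nn: "\<not> negligible G T K L"
    and ch': "chief_factor G T P Y" and as: "associated G T K L P Y"
  shows "\<not> negligible G T P Y"
proof
  assume "negligible G T P Y"
  have na: "\<not> K \<subseteq> factor_centralizer K L" by (rule not_central_if_not_negligible[OF ch nn])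
  have "\<not> P \<subseteq> factor_centralizer P Y"
    using associated_factor_centralizer(2)[OF ch na chief_factorD(1,2)[OF ch'] as]
      factor_centralizer_eq_if_associated[OF ch na ch' as]
    by simp
  then have "\<not> abelian_factor G P Y"
    using abelian_factor_iff_subset_factor_centralizer[OF closed_normalD(3)[OF chief_factorD(1)[OF ch']]]
    by simp
  then obtain K' L' where K'L': "chief_factor G T K' L'"
    "compact_factor G T K' L' \<or> discrete_factor G T K' L'" "associated G T P Y K' L'"
    using \<open>negligible G T P Y\<close> unfolding negligible_def by blast
  have "associated G T K L K' L'" by (rule associated_trans[OF ch na ch' K'L'(1) as K'L'(3)])
  then show False using nn ch K'L'(1,2) unfolding negligible_def by blast
qed

lemma chief_factor_if_crossing:
  assumes ch: "chief_factor G T K L" and nn: "\<not> negligible G T K L"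
    and P: "closed_normal G T P" and Y: "closed_normal G T Y" "Y \<subseteq> P"
    and YC: "Y \<subseteq> factor_centralizer K L" and PC: "\<not> P \<subseteq> factor_centralizer K L"
    and factor: "compact_factor G T P Y \<or> discrete_factor G T P Y \<or> chief_factor G T P Y"
  shows "chief_factor G T P Y"
proof (rule ccontr)
  assume "\<not> chief_factor G T P Y"
  then have cd: "compact_factor G T P Y \<or> discrete_factor G T P Y" using factor by blast
  obtain K' L' where ch': "chief_factor G T K' L'" and "Y \<subseteq> L'" "K' \<subseteq> P"
    and as: "associated G T K L K' L'"
    using exists_associated_chief_factor_within[OF ch not_central_if_not_negligible[OF ch nn]
        P Y(2) YC PC] .
  note K' = closed_normalD[OF chief_factorD(1)[OF ch']]
    and L' = closed_normalD[OF chief_factorD(2)[OF ch']]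
  have "compact_factor G T K' L' \<or> discrete_factor G T K' L'"
    using cd compact_factor_mono[OF closed_normalD(2)[OF P] K'(2) \<open>K' \<subseteq> P\<close> K'(4) L'(2)
        closed_normalD(2)[OF Y(1)] \<open>Y \<subseteq> L'\<close> chief_factorD(3)[OF ch']]
      discrete_factor_mono[OF closed_normalD(2)[OF P] K'(2) \<open>K' \<subseteq> P\<close> L'(2)
        closed_normalD(2)[OF Y(1)] \<open>Y \<subseteq> L'\<close> chief_factorD(3)[OF ch']]
    by blast
  then show False using nn ch ch' as unfolding negligible_def by blast
qed

end

lemma ess_chief_series_mono:
  assumes "ess_chief_series G T B n" "i \<le> j" "j \<le> n"
  shows "B i \<subseteq> B j"
  using assms(2,3)
proof (induction j rule: dec_induct)
  case (step k)
  then have "B k \<subseteq> B (Suc k)" using assms(1) unfolding ess_chief_series_def by simp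
  then show ?case using step by simp
qed simp

lemma unique_crossing_index:
  fixes B :: "nat \<Rightarrow> 'a set"
  assumes mono: "\<And>i j. i \<le> j \<Longrightarrow> j \<le> n \<Longrightarrow> B i \<subseteq> B j"
    and "B 0 \<subseteq> C" "\<not> B n \<subseteq> C"
  shows "\<exists>!j. j \<in> {1..n} \<and> B (j - 1) \<subseteq> C \<and> \<not> B j \<subseteq> C"
proof -
  define j where "j = (LEAST j. \<not> B j \<subseteq> C)"
  have j: "\<not> B j \<subseteq> C" "j \<le> n"
    unfolding j_def by (rule LeastI[of _ n], rule assms(3), rule Least_le, rule assms(3))
  then have "j \<noteq> 0" using assms(2) by auto
  then have "B (j - 1) \<subseteq> C"
    using not_less_Least[of "j - 1" "\<lambda>j. \<not> B j \<subseteq> C"] unfolding j_def by auto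
  moreover have "j' = j" if "j' \<in> {1..n}" "B (j' - 1) \<subseteq> C" "\<not> B j' \<subseteq> C" for j'
  proof -
    have "j \<le> j'" unfolding j_def by (rule Least_le) (rule that(3))
    moreover have "\<not> j < j'"
    proof
      assume "j < j'"
      then have "B j \<subseteq> B (j' - 1)" using mono that(1) by simp
      then show False using that(2) j(1) by blast
    qed
    ultimately show "j' = j" by simp
  qed
  ultimately show ?thesis using j \<open>j \<noteq> 0\<close> by (intro ex1I[of _ j]) auto
qed

lemma (in top_group) chief_factor_at_crossing:
  assumes ser: "ess_chief_series G T B n"
    and ch: "chief_factor G T K L" and nn: "\<not> negligible G T K L" and j: "j \<in> {1..n}"
    and "B (j - 1) \<subseteq> factor_centralizer K L" "\<not> B j \<subseteq> factor_centralizer K L"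
  shows "chief_factor G T (B j) (B (j - 1))"
proof -
  have B: "\<And>i. i \<le> n \<Longrightarrow> closed_normal G T (B i)"
    "\<And>i. i < n \<Longrightarrow> compact_factor G T (B (Suc i)) (B i) \<or> discrete_factor G T (B (Suc i)) (B i) \<or>
       chief_factor G T (B (Suc i)) (B i)"
    using ser unfolding ess_chief_series_def by auto
  have "closed_normal G T (B j)" "closed_normal G T (B (j - 1))" "B (j - 1) \<subseteq> B j"
    using B(1) ess_chief_series_mono[OF ser] j by auto
  moreover have "compact_factor G T (B j) (B (j - 1)) \<or> discrete_factor G T (B j) (B (j - 1)) \<or>
      chief_factor G T (B j) (B (j - 1))"
    using B(2)[of "j - 1"] j by auto
  ultimately show ?thesis using chief_factor_if_crossing[OF ch nn] assms(5,6) by blast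
qed

lemma (in top_group) ess_chief_series_unique_associated:
  assumes ser: "ess_chief_series G T B n"
    and ch: "chief_factor G T K L" and nn: "\<not> negligible G T K L"
  shows "\<exists>!j. j \<in> {j \<in> {1..n}. chief_factor G T (B j) (B (j - 1)) \<and>
                              \<not> negligible G T (B j) (B (j - 1))} \<and>
             associated G T K L (B j) (B (j - 1))"
proof -
  define C where "C = factor_centralizer K L"
  have na: "\<not> K \<subseteq> C" unfolding C_def by (rule not_central_if_not_negligible[OF ch nn])
  note K = closed_normalD[OF chief_factorD(1)[OF ch]]
  have "B 0 \<subseteq> C" "\<not> B n \<subseteq> C"
    using ser na K(3) subgroup.one_closed[OF subgroup_factor_centralizer[OF K(3)
        closed_normalD(1)[OF chief_factorD(2)[OF ch]]]]
    unfolding C_def ess_chief_series_def by auto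
  from unique_crossing_index[OF ess_chief_series_mono[OF ser] this]
  obtain j where j: "j \<in> {1..n}" "B (j - 1) \<subseteq> C" "\<not> B j \<subseteq> C"
    and unique: "\<And>j'. j' \<in> {1..n} \<Longrightarrow> B (j' - 1) \<subseteq> C \<Longrightarrow> \<not> B j' \<subseteq> C \<Longrightarrow> j' = j"
    by blast
  have chB: "chief_factor G T (B j) (B (j - 1))"
    by (rule chief_factor_at_crossing[OF ser ch nn j[unfolded C_def]])
  have as: "associated G T K L (B j) (B (j - 1))"
    using associated_iff_factor_centralizer[OF ch na[unfolded C_def] chB] j unfolding C_def by blast
  show ?thesis
  proof (rule ex1I)
    show "j \<in> {j \<in> {1..n}. chief_factor G T (B j) (B (j - 1)) \<and> \<not> negligible G T (B j) (B (j - 1))} \<and>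
        associated G T K L (B j) (B (j - 1))"
      using j(1) chB as not_negligible_if_associated[OF ch nn chB as] by blast
    fix j' assume "j' \<in> {j \<in> {1..n}. chief_factor G T (B j) (B (j - 1)) \<and>
        \<not> negligible G T (B j) (B (j - 1))} \<and> associated G T K L (B j') (B (j' - 1))"
    then show "j' = j"
      using unique associated_iff_factor_centralizer[OF ch na[unfolded C_def]] unfolding C_def by blast
  qed
qed

lemma bij_betw_if_unique_related:
  assumes "\<And>i. i \<in> I \<Longrightarrow> \<exists>!j. j \<in> J \<and> R i j" and "\<And>j. j \<in> J \<Longrightarrow> \<exists>!i. i \<in> I \<and> R i j"
  shows "\<exists>f. bij_betw f I J \<and> (\<forall>i\<in>I. \<forall>j\<in>J. R i j \<longleftrightarrow> j = f i)"
proof -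
  define f where "f i = (THE j. j \<in> J \<and> R i j)" for i
  have f: "f i \<in> J \<and> R i (f i)" if "i \<in> I" for i
    unfolding f_def by (rule theI'[OF assms(1)[OF that]])
  have rel: "R i j \<longleftrightarrow> j = f i" if "i \<in> I" "j \<in> J" for i j
    using f[OF that(1)] assms(1)[OF that(1)] that(2) by blast
  have "inj_on f I"
  proof (rule inj_onI)
    fix i i' assume "i \<in> I" "i' \<in> I" "f i = f i'"
    then have "R i (f i)" "R i' (f i)" "f i \<in> J" using f[of i] f[of i'] by auto
    then show "i = i'" using assms(2)[of "f i"] \<open>i \<in> I\<close> \<open>i' \<in> I\<close> by blast
  qed
  moreover have "f ` I = J"
  proof (intro equalityI subsetI)
    show "j \<in> J" if "j \<in> f ` I" for j using that f by blast
    fix j assume "j \<in> J"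
    then obtain i where "i \<in> I" "R i j" using assms(2) by blast
    then show "j \<in> f ` I" using rel \<open>j \<in> J\<close> by blast
  qed
  ultimately show ?thesis unfolding bij_betw_def using rel by blast
qed

theorem mainTheorem13:
  fixes G :: "('a, 'b) monoid_scheme" and T :: "'a topology"
    and A B :: "nat \<Rightarrow> 'a set" and m n :: nat
  assumes "lcsc_group G T"
    and "ess_chief_series G T A m"
    and "ess_chief_series G T B n"
  defines "I \<equiv> {i \<in> {1..m}. chief_factor G T (A i) (A (i - 1)) \<and> \<not> negligible G T (A i) (A (i - 1))}"
    and "J \<equiv> {j \<in> {1..n}. chief_factor G T (B j) (B (j - 1)) \<and> \<not> negligible G T (B j) (B (j - 1))}"
  shows "\<exists>f. bij_betw f I J \<and>
           (\<forall>i \<in> I. \<forall>j \<in> J. associated G T (A i) (A (i - 1)) (B j) (B (j - 1)) \<longleftrightarrow> j = f i)"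
proof -
  interpret top_group G T using assms(1) top_groupI unfolding lcsc_group_def by blast
  have sym: "associated G T (A i) (A (i - 1)) (B j) (B (j - 1)) \<longleftrightarrow>
      associated G T (B j) (B (j - 1)) (A i) (A (i - 1))" if "i \<in> I" "j \<in> J" for i j
    using that associated_sym chief_factorD(2) unfolding I_def J_def by blast
  show ?thesis
  proof (rule bij_betw_if_unique_related)
    fix i assume "i \<in> I"
    then show "\<exists>!j. j \<in> J \<and> associated G T (A i) (A (i - 1)) (B j) (B (j - 1))"
      using ess_chief_series_unique_associated[OF assms(3)] unfolding I_def J_def by blast
  next
    fix j assume "j \<in> J"
    then have "\<exists>!i. i \<in> I \<and> associated G T (B j) (B (j - 1)) (A i) (A (i - 1))"
      using ess_chief_series_unique_associated[OF assms(2)] unfolding I_def J_def by blast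
    then show "\<exists>!i. i \<in> I \<and> associated G T (A i) (A (i - 1)) (B j) (B (j - 1))"
      using sym \<open>j \<in> J\<close> by blast
  qed
qed

end
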